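(* For every integer $s\ge 3$ there exists $c>0$ such that for infinitely many positive integers $n$, there is a graph with $n$ vertices and with no stable set of size $s$ such that every clique cover of it has size at least $cn^{2-4/(s+1)}/(\log n)^2$.
   Context: All graphs are finite and simple. A clique $X$ of $G$ covers an edge $uv$ if $u,v\in X$; a clique cover of $G$ is a collection of cliques of $G$ that together cover all edges of $G$, and its size is the number of cliques in it. Logarithms are to base two. *)

theory Defs
  imports Complex_Main
begin

definition simple_graph :: "nat \<Rightarrow> (nat \<Rightarrow> nat \<Rightarrow> bool) \<Rightarrow> bool" where
  "simple_graph n E \<longleftrightarrow> (\<forall>u v. E u v \<longrightarrow> u < n \<and> v < n \<and> u \<noteq> v \<and> E v u)"

definition is_clique :: "nat \<Rightarrow> (nat \<Rightarrow> nat \<Rightarrow> bool) \<Rightarrow> nat set \<Rightarrow> bool" where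
  "is_clique n E X \<longleftrightarrow> X \<subseteq> {..<n} \<and> (\<forall>u\<in>X. \<forall>v\<in>X. u \<noteq> v \<longrightarrow> E u v)"

definition is_stable :: "nat \<Rightarrow> (nat \<Rightarrow> nat \<Rightarrow> bool) \<Rightarrow> nat set \<Rightarrow> bool" where
  "is_stable n E X \<longleftrightarrow> X \<subseteq> {..<n} \<and> (\<forall>u\<in>X. \<forall>v\<in>X. \<not> E u v)"

definition clique_cover :: "nat \<Rightarrow> (nat \<Rightarrow> nat \<Rightarrow> bool) \<Rightarrow> nat set set \<Rightarrow> bool" where
  "clique_cover n E C \<longleftrightarrow> (\<forall>X\<in>C. is_clique n E X) \<and>
     (\<forall>u v. E u v \<longrightarrow> (\<exists>X\<in>C. u \<in> X \<and> v \<in> X))"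

end

theory Submission
  imports Defs "HOL-Probability.Product_PMF"
begin

text \<open>Colour each pair of an \<open>n\<close>-set independently, \<open>True\<close> with a small probability \<open>p\<close>.
  By the Lovasz local lemma, in Spencer's form for off-diagonal Ramsey numbers, some colouring has
  no \<open>s\<close>-set all of whose pairs are \<open>True\<close> and no \<open>t\<close>-set all of whose pairs are \<open>False\<close>,
  when \<open>n = k ^ (s + 1)\<close>, \<open>p = 1 / (4 s\<^sup>2 k\<^sup>2)\<close> and \<open>t = 8 log\<^sub>2 n / p\<close>.
  The graph of \<open>False\<close> pairs then has no stable \<open>s\<close>-set, so a greedy argument gives it at
  least \<open>n\<^sup>2 / (8 (s - 1))\<close> ordered edges, while each of its cliques has fewer than \<open>t\<close>
  vertices and covers fewer than \<open>t\<^sup>2\<close> of them. Hence every clique cover has at least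
  \<open>n\<^sup>2 / (8 (s - 1) t\<^sup>2)\<close> members, and \<open>t\<close> is of order \<open>n ^ (2 / (s + 1)) log n\<close>.\<close>

section \<open>The Lovasz local lemma\<close>

lemma prod_le_prod_subset:
  fixes f :: "'a \<Rightarrow> 'b::linordered_idom"
  assumes "finite B" "A \<subseteq> B" "\<And>b. b \<in> B \<Longrightarrow> 0 \<le> f b \<and> f b \<le> 1"
  shows "prod f B \<le> prod f A"
proof -
  have "prod f B = prod f A * prod f (B - A)"
    using prod.subset_diff[OF assms(2,1)] by (simp add: mult.commute)
  also have "\<dots> \<le> prod f A * 1"
    using assms by (intro mult_left_mono prod_le_1 prod_nonneg) auto
  finally show ?thesis by simp
qed

definition none_of :: "('i \<Rightarrow> 'a set) \<Rightarrow> 'i set \<Rightarrow> 'a set" where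
  "none_of A J = {\<omega>. \<forall>j\<in>J. \<omega> \<notin> A j}"

lemma none_of_empty [simp]: "none_of A {} = UNIV"
  by (simp add: none_of_def)

lemma none_of_insert: "none_of A (insert j J) = none_of A J - A j \<inter> none_of A J"
  by (auto simp: none_of_def)

lemma none_of_antimono: "J \<subseteq> K \<Longrightarrow> none_of A K \<subseteq> none_of A J"
  by (auto simp: none_of_def)

text \<open>Only the one-sided inequality of mutual independence is assumed (lopsided local lemma),
  and an event may belong to its own neighbourhood \<open>G i\<close>.\<close>
locale local_lemma =
  fixes M :: "'a pmf" and I :: "'i set" and A :: "'i \<Rightarrow> 'a set"
    and G :: "'i \<Rightarrow> 'i set" and x :: "'i \<Rightarrow> real"
  assumes finite_I: "finite I"
    and indep: "\<And>i J. i \<in> I \<Longrightarrow> J \<subseteq> I - G i - {i} \<Longrightarrow>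
      measure_pmf.prob M (A i \<inter> none_of A J) \<le>
        measure_pmf.prob M (A i) * measure_pmf.prob M (none_of A J)"
    and weight_bounds: "\<And>i. i \<in> I \<Longrightarrow> 0 \<le> x i \<and> x i < 1"
    and prob_le_weight: "\<And>i. i \<in> I \<Longrightarrow>
      measure_pmf.prob M (A i) \<le> x i * (\<Prod>j\<in>G i \<inter> I. 1 - x j)"
begin

abbreviation P :: "'a set \<Rightarrow> real" where
  "P \<equiv> measure_pmf.prob M"

lemma prob_none_of_extend:
  assumes "finite D" "R \<inter> D = {}" "R \<union> D \<subseteq> I"
    and cond: "\<And>T i. R \<subseteq> T \<Longrightarrow> T \<subset> R \<union> D \<Longrightarrow> i \<in> I - T \<Longrightarrow>
      P (A i \<inter> none_of A T) \<le> x i * P (none_of A T)"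
  shows "(\<Prod>j\<in>D. 1 - x j) * P (none_of A R) \<le> P (none_of A (R \<union> D))"
  using assms
proof (induction D rule: finite_induct)
  case empty
  then show ?case by simp
next
  case (insert j D)
  have j: "j \<in> I" "j \<notin> R \<union> D"
    using insert.hyps(2) insert.prems(1,2) by auto
  have IH: "(\<Prod>i\<in>D. 1 - x i) * P (none_of A R) \<le> P (none_of A (R \<union> D))"
    using insert.prems by (intro insert.IH) auto
  have "(1 - x j) * P (none_of A (R \<union> D)) \<le>
      P (none_of A (R \<union> D)) - P (A j \<inter> none_of A (R \<union> D))"
    using insert.prems(3)[of "R \<union> D" j] j insert.hyps(2) by (auto simp: algebra_simps)
  also have "\<dots> = P (none_of A (R \<union> insert j D))"
    by (simp add: none_of_insert measure_pmf.finite_measure_Diff)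
  finally have step: "(1 - x j) * P (none_of A (R \<union> D)) \<le> P (none_of A (R \<union> insert j D))" .
  have "(\<Prod>i\<in>insert j D. 1 - x i) * P (none_of A R) = (1 - x j) * ((\<Prod>i\<in>D. 1 - x i) * P (none_of A R))"
    using insert.hyps by simp
  also have "\<dots> \<le> (1 - x j) * P (none_of A (R \<union> D))"
    using IH weight_bounds[OF j(1)] by (intro mult_left_mono) auto
  finally show ?case using step by linarith
qed

lemma prob_event_inter_none_of:
  assumes "S \<subseteq> I" "i \<in> I - S"
  shows "P (A i \<inter> none_of A S) \<le> x i * P (none_of A S)"
proof -
  have "finite S" using assms(1) finite_I finite_subset by blast
  then show ?thesis using assms
  proof (induction S arbitrary: i rule: finite_psubset_induct)
    case (psubset S)
    define R where "R = S - G i"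
    have "P (A i \<inter> none_of A S) \<le> P (A i \<inter> none_of A R)"
      using none_of_antimono[of R S A] unfolding R_def by (intro measure_pmf.finite_measure_mono) auto
    also have "\<dots> \<le> P (A i) * P (none_of A R)"
      using indep[of i R] psubset.prems unfolding R_def by blast
    also have "\<dots> \<le> x i * (\<Prod>j\<in>G i \<inter> I. 1 - x j) * P (none_of A R)"
      using prob_le_weight[of i] psubset.prems by (simp add: mult_right_mono)
    also have "\<dots> \<le> x i * (\<Prod>j\<in>S \<inter> G i. 1 - x j) * P (none_of A R)"
    proof -
      have "(\<Prod>j\<in>G i \<inter> I. 1 - x j) \<le> (\<Prod>j\<in>S \<inter> G i. 1 - x j)"
        using weight_bounds psubset.prems(1) finite_I
        by (intro prod_le_prod_subset) (auto simp: less_imp_le)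
      then show ?thesis
        using weight_bounds[of i] psubset.prems by (intro mult_right_mono mult_left_mono) auto
    qed
    also have "\<dots> \<le> x i * P (none_of A S)"
    proof -
      have RS: "R \<union> (S \<inter> G i) = S" unfolding R_def by blast
      have "(\<Prod>j\<in>S \<inter> G i. 1 - x j) * P (none_of A R) \<le> P (none_of A (R \<union> (S \<inter> G i)))"
      proof (rule prob_none_of_extend)
        fix T k assume "T \<subset> R \<union> (S \<inter> G i)" "k \<in> I - T"
        then show "P (A k \<inter> none_of A T) \<le> x k * P (none_of A T)"
          using psubset.IH psubset.prems(1) unfolding RS by blast
      qed (use psubset in \<open>auto simp: R_def\<close>)
      moreover note RS
      ultimately show ?thesis
        using weight_bounds[of i] psubset.prems by (auto simp: mult.assoc intro: mult_left_mono)
    qed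
    finally show ?case .
  qed
qed

theorem lovasz_local_lemma: "(\<Prod>i\<in>I. 1 - x i) \<le> P (none_of A I)"
  using prob_none_of_extend[of I "{}"] finite_I prob_event_inter_none_of by auto

corollary lovasz_local_lemma_exists: "\<exists>\<omega>. \<forall>i\<in>I. \<omega> \<notin> A i"
proof -
  have "0 < (\<Prod>i\<in>I. 1 - x i)"
    using weight_bounds by (intro prod_pos) auto
  then have "none_of A I \<noteq> {}"
    using lovasz_local_lemma by auto
  then show ?thesis by (auto simp: none_of_def)
qed

end

lemma measure_pair_pmf_Times:
  "measure_pmf.prob (pair_pmf M N) (X \<times> Y) = measure_pmf.prob M X * measure_pmf.prob N Y"
proof -
  have "measure_pmf.prob (pair_pmf M N) (X \<times> Y) =
      measure_pmf.prob (pair_pmf M N) ((X \<inter> set_pmf M) \<times> (Y \<inter> set_pmf N))"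
    by (subst (1 2) measure_Int_set_pmf[symmetric]) (auto intro: arg_cong[where f = "measure_pmf.prob _"])
  also have "\<dots> = measure_pmf.prob M (X \<inter> set_pmf M) * measure_pmf.prob N (Y \<inter> set_pmf N)"
    by (rule measure_pmf_prob_product) (auto intro: countable_subset)
  finally show ?thesis by (simp add: measure_Int_set_pmf)
qed

lemma measure_Pi_pmf_Int_independent:
  fixes K :: "'k set" and q :: "'k \<Rightarrow> 'v pmf"
  assumes "finite K" "K1 \<subseteq> K"
    and X: "\<And>f g. (\<forall>e\<in>K1. f e = g e) \<Longrightarrow> f \<in> X \<longleftrightarrow> g \<in> X"
    and Y: "\<And>f g. (\<forall>e. e \<notin> K1 \<longrightarrow> f e = g e) \<Longrightarrow> f \<in> Y \<longleftrightarrow> g \<in> Y"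
  shows "measure_pmf.prob (Pi_pmf K d q) (X \<inter> Y) =
     measure_pmf.prob (Pi_pmf K d q) X * measure_pmf.prob (Pi_pmf K d q) Y"
proof -
  define h :: "('k \<Rightarrow> 'v) \<times> ('k \<Rightarrow> 'v) \<Rightarrow> 'k \<Rightarrow> 'v"
    where "h = (\<lambda>(f, g) e. if e \<in> K1 then f e else g e)"
  have "Pi_pmf K d q = Pi_pmf (K1 \<union> (K - K1)) d q"
    using assms(2) by (simp add: Un_absorb1)
  also have "\<dots> = map_pmf h (pair_pmf (Pi_pmf K1 d q) (Pi_pmf (K - K1) d q))"
    unfolding h_def by (rule Pi_pmf_union) (use assms(1,2) finite_subset in auto)
  finally have M: "Pi_pmf K d q = map_pmf h (pair_pmf (Pi_pmf K1 d q) (Pi_pmf (K - K1) d q))" .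
  have "h (f, g) \<in> X \<longleftrightarrow> f \<in> X" "h (f, g) \<in> Y \<longleftrightarrow> g \<in> Y" for f g
    by (rule X, simp add: h_def, rule Y, simp add: h_def)
  then have preimages: "h -` X = X \<times> UNIV" "h -` Y = UNIV \<times> Y" "h -` (X \<inter> Y) = X \<times> Y"
    by auto
  show ?thesis
    unfolding M measure_map_pmf preimages measure_pair_pmf_Times by simp
qed

lemma measure_Pi_pmf_all_eq:
  assumes "finite K" "L \<subseteq> K"
  shows "measure_pmf.prob (Pi_pmf K d q) {f. \<forall>e\<in>L. f e = b} = (\<Prod>e\<in>L. pmf (q e) b)"
proof -
  have "{f. \<forall>e\<in>L. f e = b} = Pi K (\<lambda>e. if e \<in> L then {b} else UNIV)"
    using assms(2) by (auto simp: Pi_def)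
  then have "measure_pmf.prob (Pi_pmf K d q) {f. \<forall>e\<in>L. f e = b} =
      (\<Prod>e\<in>K. measure_pmf.prob (q e) (if e \<in> L then {b} else UNIV))"
    using measure_Pi_pmf_Pi[OF assms(1)] by simp
  also have "\<dots> = (\<Prod>e\<in>K. if e \<in> L then pmf (q e) b else 1)"
    by (intro prod.cong) (auto simp: measure_pmf_single)
  also have "\<dots> = (\<Prod>e\<in>L. pmf (q e) b)"
    using assms by (simp add: prod.If_cases Int_absorb1)
  finally show ?thesis .
qed

section \<open>Random colourings of pairs\<close>

definition two_subsets :: "'a set \<Rightarrow> 'a set set" where
  "two_subsets X = {e. e \<subseteq> X \<and> card e = 2}"

lemma card_two_subsets: "finite X \<Longrightarrow> card (two_subsets X) = card X choose 2"
  unfolding two_subsets_def by (rule n_subsets)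

lemma two_subsets_mono: "X \<subseteq> Y \<Longrightarrow> two_subsets X \<subseteq> two_subsets Y"
  unfolding two_subsets_def by auto

lemma two_subsets_disjoint:
  assumes "finite X" "card (X \<inter> Y) < 2"
  shows "two_subsets X \<inter> two_subsets Y = {}"
proof -
  have False if "e \<in> two_subsets X \<inter> two_subsets Y" for e
  proof -
    have "e \<subseteq> X \<inter> Y" "card e = 2"
      using that unfolding two_subsets_def by auto
    then have "2 \<le> card (X \<inter> Y)"
      using card_mono[of "X \<inter> Y" e] assms(1) by simp
    then show False
      using assms(2) by simp
  qed
  then show ?thesis by blast
qed

lemma mem_two_subsets_iff: "e \<in> two_subsets X \<longleftrightarrow> (\<exists>u\<in>X. \<exists>v\<in>X. u \<noteq> v \<and> e = {u, v})"
  unfolding two_subsets_def by (auto simp: card_2_iff)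

lemma card_subsets_meeting_twice:
  assumes "finite V" "finite X" "2 \<le> s"
  shows "card {Y. Y \<subseteq> V \<and> card Y = s \<and> 2 \<le> card (X \<inter> Y)} \<le> (card X choose 2) * card V ^ (s - 2)"
proof -
  let ?Z = "{Z. Z \<subseteq> V \<and> card Z = s - 2}"
  have fin: "finite (two_subsets X \<times> ?Z)"
    using assms unfolding two_subsets_def by simp
  have "{Y. Y \<subseteq> V \<and> card Y = s \<and> 2 \<le> card (X \<inter> Y)} \<subseteq> (\<lambda>(e, Z). e \<union> Z) ` (two_subsets X \<times> ?Z)"
  proof
    fix Y assume "Y \<in> {Y. Y \<subseteq> V \<and> card Y = s \<and> 2 \<le> card (X \<inter> Y)}"
    then have Y: "Y \<subseteq> V" "card Y = s" "2 \<le> card (X \<inter> Y)" by auto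
    obtain e where e: "e \<subseteq> X \<inter> Y" "card e = 2"
      using Y(3) by (meson obtain_subset_with_card_n)
    have "finite e"
      using e(2) by (simp add: card_ge_0_finite)
    then have "card (Y - e) = s - 2"
      using e Y by (simp add: card_Diff_subset)
    moreover have "Y = e \<union> (Y - e)" "e \<in> two_subsets X"
      using e unfolding two_subsets_def by auto
    ultimately show "Y \<in> (\<lambda>(e, Z). e \<union> Z) ` (two_subsets X \<times> ?Z)"
      using Y(1) by blast
  qed
  then have "card {Y. Y \<subseteq> V \<and> card Y = s \<and> 2 \<le> card (X \<inter> Y)} \<le> card ((\<lambda>(e, Z). e \<union> Z) ` (two_subsets X \<times> ?Z))"
    by (rule card_mono[OF finite_imageI[OF fin]])
  also have "\<dots> \<le> card (two_subsets X \<times> ?Z)"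
    by (rule card_image_le[OF fin])
  also have "\<dots> = (card X choose 2) * (card V choose (s - 2))"
    using assms by (simp add: card_cartesian_product card_two_subsets n_subsets)
  also have "\<dots> \<le> (card X choose 2) * card V ^ (s - 2)"
    by (cases "s - 2 \<le> card V") (auto simp: binomial_le_pow binomial_eq_0)
  finally show ?thesis .
qed

definition monochromatic :: "bool \<Rightarrow> 'a set \<Rightarrow> ('a set \<Rightarrow> bool) set" where
  "monochromatic b X = {\<omega>. \<forall>e\<in>two_subsets X. \<omega> e = b}"

lemma prob_monochromatic:
  assumes "finite V" "X \<subseteq> V" "0 \<le> p" "p \<le> 1"
  shows "measure_pmf.prob (Pi_pmf (two_subsets V) d (\<lambda>_. bernoulli_pmf p)) (monochromatic b X) =
    (if b then p else 1 - p) ^ (card X choose 2)"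
proof -
  have "finite (two_subsets V)"
    using assms(1) unfolding two_subsets_def by simp
  then have "measure_pmf.prob (Pi_pmf (two_subsets V) d (\<lambda>_. bernoulli_pmf p)) (monochromatic b X) =
      (\<Prod>e\<in>two_subsets X. pmf (bernoulli_pmf p) b)"
    unfolding monochromatic_def using two_subsets_mono[OF assms(2)] by (rule measure_Pi_pmf_all_eq)
  then show ?thesis
    using assms finite_subset[OF assms(2,1)] by (simp add: card_two_subsets)
qed

lemma prob_monochromatic_Int_none_of:
  fixes V :: "'a set" and c :: "'a set \<Rightarrow> bool" and d :: bool and q :: "'a set \<Rightarrow> bool pmf"
  defines "M \<equiv> Pi_pmf (two_subsets V) d q"
    and "none_mono \<equiv> none_of (\<lambda>Y. monochromatic (c Y) Y)"
  assumes "finite V" "X \<subseteq> V" and sparse: "\<And>Y. Y \<in> J \<Longrightarrow> card (X \<inter> Y) < 2"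
  shows "measure_pmf.prob M (monochromatic b X \<inter> none_mono J) =
    measure_pmf.prob M (monochromatic b X) * measure_pmf.prob M (none_mono J)"
  unfolding M_def
proof (rule measure_Pi_pmf_Int_independent)
  show "finite (two_subsets V)"
    using assms(3) unfolding two_subsets_def by simp
  show "two_subsets X \<subseteq> two_subsets V"
    using assms(4) by (rule two_subsets_mono)
  show "f \<in> monochromatic b X \<longleftrightarrow> g \<in> monochromatic b X" if "\<forall>e\<in>two_subsets X. f e = g e" for f g
    using that unfolding monochromatic_def by auto
  have "two_subsets X \<inter> two_subsets Y = {}" if "Y \<in> J" for Y
    using two_subsets_disjoint finite_subset[OF assms(4,3)] sparse[OF that] by blast
  then show "f \<in> none_mono J \<longleftrightarrow> g \<in> none_mono J" if "\<forall>e. e \<notin> two_subsets X \<longrightarrow> f e = g e" for f g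
    using that unfolding none_mono_def none_of_def monochromatic_def by blast
qed

lemma prod_weights_ge:
  fixes x y :: real
  assumes "0 \<le> x" "x \<le> 1" "0 \<le> y" "y \<le> 1" "2 \<le> s" "s \<noteq> t" "finite X"
  shows "(1 - x) ^ ((card X choose 2) * n ^ (s - 2)) * (1 - y) ^ (n choose t) \<le>
    (\<Prod>Y | Y \<subseteq> {..<n} \<and> (card Y = s \<or> card Y = t) \<and> 2 \<le> card (X \<inter> Y).
      1 - (if card Y = s then x else y))"
proof -
  define Gs where "Gs = {Y. Y \<subseteq> {..<n} \<and> card Y = s \<and> 2 \<le> card (X \<inter> Y)}"
  define Gt where "Gt = {Y. Y \<subseteq> {..<n} \<and> card Y = t \<and> 2 \<le> card (X \<inter> Y)}"
  have "{Y. Y \<subseteq> {..<n} \<and> (card Y = s \<or> card Y = t) \<and> 2 \<le> card (X \<inter> Y)} = Gs \<union> Gt"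
    "Gs \<inter> Gt = {}" "finite Gs" "finite Gt"
    unfolding Gs_def Gt_def using \<open>s \<noteq> t\<close> by auto
  then have "(\<Prod>Y | Y \<subseteq> {..<n} \<and> (card Y = s \<or> card Y = t) \<and> 2 \<le> card (X \<inter> Y).
      1 - (if card Y = s then x else y)) = (1 - x) ^ card Gs * (1 - y) ^ card Gt"
    using \<open>s \<noteq> t\<close> by (simp add: prod.union_disjoint Gs_def Gt_def)
  moreover have "card Gs \<le> (card X choose 2) * n ^ (s - 2)"
    using card_subsets_meeting_twice[of "{..<n}" X s] assms(5,7) unfolding Gs_def by simp
  moreover have "card Gt \<le> n choose t"
    using card_mono[of "{Y. Y \<subseteq> {..<n} \<and> card Y = t}" Gt] n_subsets[of "{..<n}" t]
    unfolding Gt_def by auto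
  ultimately show ?thesis
    using assms(1-4) by (auto intro!: mult_mono power_decreasing)
qed

lemma ramsey_colouring_exists:
  fixes n s t :: nat and p x y :: real
  assumes p: "0 \<le> p" "p \<le> 1" and x: "0 \<le> x" "x < 1" and y: "0 \<le> y" "y < 1"
    and "2 \<le> s" "s \<noteq> t"
    and s_cond: "p ^ (s choose 2) \<le> x * (1 - x) ^ ((s choose 2) * n ^ (s - 2)) * (1 - y) ^ (n choose t)"
    and t_cond: "(1 - p) ^ (t choose 2) \<le> y * (1 - x) ^ ((t choose 2) * n ^ (s - 2)) * (1 - y) ^ (n choose t)"
  shows "\<exists>\<omega>. (\<forall>X\<subseteq>{..<n}. card X = s \<longrightarrow> \<omega> \<notin> monochromatic True X) \<and>
    (\<forall>X\<subseteq>{..<n}. card X = t \<longrightarrow> \<omega> \<notin> monochromatic False X)"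
proof -
  define M where "M = Pi_pmf (two_subsets {..<n::nat}) False (\<lambda>_. bernoulli_pmf p)"
  define I where "I = {X. X \<subseteq> {..<n} \<and> (card X = s \<or> card X = t)}"
  define ev where "ev X = monochromatic (card X = s) X" for X :: "nat set"
  define G where "G X = {Y. 2 \<le> card (X \<inter> Y)}" for X :: "nat set"
  define w where "w X = (if card X = s then x else y)" for X :: "nat set"
  have I_sub: "X \<subseteq> {..<n}" if "X \<in> I" for X
    using that unfolding I_def by auto
  interpret local_lemma M I ev G w
  proof
    show "finite I"
      unfolding I_def by simp
  next
    fix X J assume "X \<in> I" "J \<subseteq> I - G X - {X}"
    then show "measure_pmf.prob M (ev X \<inter> none_of ev J) \<le>
        measure_pmf.prob M (ev X) * measure_pmf.prob M (none_of ev J)"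
      unfolding M_def ev_def using I_sub
      by (subst prob_monochromatic_Int_none_of) (auto simp: G_def)
  next
    fix X assume "X \<in> I"
    show "0 \<le> w X \<and> w X < 1"
      using x y unfolding w_def by simp
  next
    fix X assume X: "X \<in> I"
    have "measure_pmf.prob M (ev X) = (if card X = s then p else 1 - p) ^ (card X choose 2)"
      unfolding M_def ev_def using I_sub[OF X] p by (intro prob_monochromatic) auto
    also have "\<dots> \<le> w X * ((1 - x) ^ ((card X choose 2) * n ^ (s - 2)) * (1 - y) ^ (n choose t))"
      using s_cond t_cond X unfolding w_def I_def by (auto simp: mult.assoc)
    also have "\<dots> \<le> w X * (\<Prod>Y\<in>G X \<inter> I. 1 - w Y)"
      using prod_weights_ge[of x y s t X n] x y I_sub[OF X] \<open>2 \<le> s\<close> \<open>s \<noteq> t\<close>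
      unfolding w_def G_def I_def by (intro mult_left_mono) (auto simp: Int_def conj_commute finite_subset)
    finally show "measure_pmf.prob M (ev X) \<le> w X * (\<Prod>Y\<in>G X \<inter> I. 1 - w Y)" .
  qed
  obtain \<omega> where "\<forall>X\<in>I. \<omega> \<notin> ev X"
    using lovasz_local_lemma_exists by blast
  then show ?thesis
    using \<open>s \<noteq> t\<close> unfolding I_def ev_def by (intro exI[of _ \<omega>]) auto
qed

lemma ramsey_graph_exists:
  fixes n s t :: nat and p x y :: real
  assumes "0 \<le> p" "p \<le> 1" "0 \<le> x" "x < 1" "0 \<le> y" "y < 1" "2 \<le> s" "s \<noteq> t"
    and "p ^ (s choose 2) \<le> x * (1 - x) ^ ((s choose 2) * n ^ (s - 2)) * (1 - y) ^ (n choose t)"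
    and "(1 - p) ^ (t choose 2) \<le> y * (1 - x) ^ ((t choose 2) * n ^ (s - 2)) * (1 - y) ^ (n choose t)"
  shows "\<exists>E. simple_graph n E \<and> \<not> (\<exists>S. is_stable n E S \<and> card S = s) \<and>
    \<not> (\<exists>T. is_clique n E T \<and> card T = t)"
proof -
  obtain \<omega> where
    no_true: "\<And>X. X \<subseteq> {..<n} \<Longrightarrow> card X = s \<Longrightarrow> \<omega> \<notin> monochromatic True X" and
    no_false: "\<And>X. X \<subseteq> {..<n} \<Longrightarrow> card X = t \<Longrightarrow> \<omega> \<notin> monochromatic False X"
    using ramsey_colouring_exists[OF assms] by blast
  define E where "E u v \<longleftrightarrow> u < n \<and> v < n \<and> u \<noteq> v \<and> \<not> \<omega> {u, v}" for u v
  have "simple_graph n E"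
    unfolding simple_graph_def E_def by (simp add: insert_commute)
  moreover have "\<not> (\<exists>S. is_stable n E S \<and> card S = s)"
  proof
    assume "\<exists>S. is_stable n E S \<and> card S = s"
    then obtain S where S: "is_stable n E S" "card S = s"
      by blast
    have "\<omega> e" if e: "e \<in> two_subsets S" for e
    proof -
      obtain u v where "u \<in> S" "v \<in> S" "u \<noteq> v" "e = {u, v}"
        using e unfolding mem_two_subsets_iff by blast
      then show ?thesis
        using S(1) unfolding is_stable_def E_def by auto
    qed
    then have "\<omega> \<in> monochromatic True S"
      unfolding monochromatic_def by simp
    then show False
      using no_true S unfolding is_stable_def by blast
  qed
  moreover have "\<not> (\<exists>T. is_clique n E T \<and> card T = t)"
  proof
    assume "\<exists>T. is_clique n E T \<and> card T = t"
    then obtain T where T: "is_clique n E T" "card T = t"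
      by blast
    have "\<not> \<omega> e" if e: "e \<in> two_subsets T" for e
    proof -
      obtain u v where "u \<in> T" "v \<in> T" "u \<noteq> v" "e = {u, v}"
        using e unfolding mem_two_subsets_iff by blast
      then show ?thesis
        using T(1) unfolding is_clique_def E_def by auto
    qed
    then have "\<omega> \<in> monochromatic False T"
      unfolding monochromatic_def by simp
    then show False
      using no_false T unfolding is_clique_def by blast
  qed
  ultimately show ?thesis
    by blast
qed

section \<open>Edges and clique covers of graphs without large stable sets\<close>

lemma greedy_stable_set:
  fixes E :: "'a \<Rightarrow> 'a \<Rightarrow> bool"
  assumes sym: "\<And>u v. E u v \<Longrightarrow> E v u" and irrefl: "\<And>u. \<not> E u u"
    and "finite A" and degree: "\<forall>v\<in>A. card {u\<in>A. E v u} < d"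
  shows "\<exists>S\<subseteq>A. (\<forall>u\<in>S. \<forall>v\<in>S. \<not> E u v) \<and> card A \<le> card S * d"
  using assms(3,4)
proof (induction A rule: finite_psubset_induct)
  case (psubset A)
  show ?case
  proof (cases "A = {}")
    case False
    then obtain v where v: "v \<in> A" by blast
    define N where "N = {u\<in>A. E v u}"
    define A' where "A' = A - insert v N"
    have "A' \<subset> A"
      using v unfolding A'_def by auto
    have "card {u\<in>A'. E w u} < d" if "w \<in> A'" for w
    proof -
      have "card {u\<in>A'. E w u} \<le> card {u\<in>A. E w u}"
        using \<open>A' \<subset> A\<close> psubset.hyps by (intro card_mono) auto
      moreover have "card {u\<in>A. E w u} < d"
        using that \<open>A' \<subset> A\<close> psubset.prems by blast
      ultimately show ?thesis by linarith
    qed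
    then obtain S where S: "S \<subseteq> A'" "\<forall>u\<in>S. \<forall>w\<in>S. \<not> E u w" "card A' \<le> card S * d"
      using psubset.IH[OF \<open>A' \<subset> A\<close>] by blast
    have "finite S"
      using S(1) \<open>A' \<subset> A\<close> psubset.hyps by (meson finite_subset less_imp_le)
    have "v \<notin> S" "\<forall>u\<in>S. \<not> E v u"
      using S(1) unfolding A'_def N_def by auto
    then have stable: "\<forall>u\<in>insert v S. \<forall>w\<in>insert v S. \<not> E u w"
      using S(2) irrefl sym by blast
    have "A = A' \<union> insert v N"
      using v unfolding A'_def N_def by auto
    then have "card A \<le> card A' + card (insert v N)"
      by (metis card_Un_le)
    also have "card (insert v N) \<le> Suc (card N)"
      using psubset.hyps unfolding N_def by (simp add: card_insert_if)
    also have "card N < d"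
      using psubset.prems v unfolding N_def by blast
    finally have "card A \<le> card (insert v S) * d"
      using S(3) \<open>v \<notin> S\<close> \<open>finite S\<close> by simp
    then show ?thesis
      using stable S(1) v unfolding A'_def by (intro exI[of _ "insert v S"]) auto
  qed simp
qed

lemma simple_graphD:
  assumes "simple_graph n E" "E u v"
  shows "u < n" "v < n" "u \<noteq> v" "E v u"
  using assms unfolding simple_graph_def by blast+

lemma finite_neighbours: "simple_graph n E \<Longrightarrow> finite {u. E v u}"
  by (rule finite_subset[of _ "{..<n}"]) (auto dest: simple_graphD)

lemma card_low_degree_le:
  assumes graph: "simple_graph n E" and no_stable: "\<not> (\<exists>S. is_stable n E S \<and> card S = s)"
  shows "card {v\<in>{..<n}. card {u. E v u} < d} \<le> (s - 1) * d"
proof -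
  define A where "A = {v\<in>{..<n}. card {u. E v u} < d}"
  have low: "\<forall>v\<in>A. card {u\<in>A. E v u} < d"
  proof
    fix v assume "v \<in> A"
    have "card {u\<in>A. E v u} \<le> card {u. E v u}"
      using finite_neighbours[OF graph] by (rule card_mono) auto
    then show "card {u\<in>A. E v u} < d"
      using \<open>v \<in> A\<close> unfolding A_def by simp
  qed
  have sym: "E v u" if "E u v" for u v
    using simple_graphD(4)[OF graph that] .
  have irrefl: "\<not> E u u" for u
    using simple_graphD(3)[OF graph, of u u] by blast
  have "finite A"
    unfolding A_def by simp
  then obtain S where S: "S \<subseteq> A" "\<forall>u\<in>S. \<forall>v\<in>S. \<not> E u v" "card A \<le> card S * d"
    using greedy_stable_set[of E A d, OF sym irrefl _ low] by blast
  have "card S \<le> s - 1"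
  proof (rule ccontr)
    assume "\<not> card S \<le> s - 1"
    then have "s \<le> card S"
      by linarith
    then obtain T where "T \<subseteq> S" "card T = s"
      by (meson obtain_subset_with_card_n)
    then have "is_stable n E T \<and> card T = s"
      using S unfolding is_stable_def A_def by auto
    then show False
      using no_stable by blast
  qed
  then have "card A \<le> (s - 1) * d"
    using S(3) mult_le_mono1[of "card S" "s - 1" d] by linarith
  then show ?thesis
    unfolding A_def .
qed

lemma card_edges_ge_high_degree:
  assumes graph: "simple_graph n E"
  shows "(n - card {v\<in>{..<n}. card {u. E v u} < d}) * d \<le> card {(u, v). E u v}"
proof -
  define A where "A = {v\<in>{..<n}. card {u. E v u} < d}"
  have "card ({..<n} - A) = n - card A"
    by (subst card_Diff_subset) (auto simp: A_def)
  then have "(n - card A) * d = (\<Sum>u\<in>{..<n} - A. d)"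
    by simp
  also have "\<dots> \<le> (\<Sum>u\<in>{..<n} - A. card {v. E u v})"
    by (rule sum_mono) (auto simp: A_def)
  also have "\<dots> \<le> (\<Sum>u<n. card {v. E u v})"
    by (rule sum_mono2) auto
  also have "\<dots> = card (Sigma {..<n} (\<lambda>u. {v. E u v}))"
    using finite_neighbours[OF graph] by (simp add: card_SigmaI)
  also have "Sigma {..<n} (\<lambda>u. {v. E u v}) = {(u, v). E u v}"
    using simple_graphD[OF graph] by auto
  finally show ?thesis
    unfolding A_def .
qed

text \<open>Vertices of degree below \<open>d = n / (2 (s - 1))\<close> span a graph with no stable \<open>s\<close>-set,
  so greedily there are at most \<open>n / 2\<close> of them; the others carry \<open>n d / 2\<close> edges.\<close>
lemma card_edges_ge_if_no_stable_set:
  assumes graph: "simple_graph n E" and no_stable: "\<not> (\<exists>S. is_stable n E S \<and> card S = s)"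
    and "2 \<le> s" "4 * (s - 1) \<le> n"
  shows "n\<^sup>2 \<le> 8 * (s - 1) * card {(u, v). E u v}"
proof -
  define m where "m = s - 1"
  define d where "d = n div (2 * m)"
  define A where "A = {v\<in>{..<n}. card {u. E v u} < d}"
  have "card A \<le> m * d" "2 * m * d \<le> n"
    using card_low_degree_le[OF graph no_stable] times_div_less_eq_dividend[of "2 * m" n]
    unfolding A_def m_def d_def by simp_all
  then have half: "n \<le> 2 * (n - card A)"
    by linarith
  have "2 * m * d + n mod (2 * m) = n"
    unfolding d_def by (rule mult_div_mod_eq)
  moreover have "n mod (2 * m) < 2 * m"
    using \<open>2 \<le> s\<close> unfolding m_def by simp
  ultimately have dense: "n \<le> 4 * m * d"
    using \<open>4 * (s - 1) \<le> n\<close> unfolding m_def by linarith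
  have "n\<^sup>2 \<le> 4 * m * (n * d)"
    using dense by (simp add: power2_eq_square)
  also have "\<dots> \<le> 4 * m * (2 * (n - card A) * d)"
    using half by (intro mult_le_mono2 mult_le_mono1)
  also have "\<dots> \<le> 8 * m * card {(u, v). E u v}"
    using card_edges_ge_high_degree[OF graph, of d] unfolding A_def by simp
  finally show ?thesis
    unfolding m_def .
qed

lemma card_edges_le_clique_cover:
  assumes cover: "clique_cover n E C" and small: "\<forall>X\<in>C. card X \<le> t"
  shows "card {(u, v). E u v} \<le> card C * t\<^sup>2"
proof -
  have "C \<subseteq> Pow {..<n}"
    using cover unfolding clique_cover_def is_clique_def by auto
  then have finite_C: "finite C" and finite_X: "\<And>X. X \<in> C \<Longrightarrow> finite X"
    by (auto intro: finite_subset)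
  have "{(u, v). E u v} \<subseteq> (\<Union>X\<in>C. X \<times> X)"
    using cover unfolding clique_cover_def by blast
  then have "card {(u, v). E u v} \<le> card (\<Union>X\<in>C. X \<times> X)"
    using finite_C finite_X by (intro card_mono) auto
  also have "\<dots> \<le> (\<Sum>X\<in>C. card (X \<times> X))"
    by (rule card_UN_le[OF finite_C])
  also have "\<dots> \<le> (\<Sum>X\<in>C. t\<^sup>2)"
    using small by (intro sum_mono) (simp add: card_cartesian_product power2_eq_square mult_le_mono)
  finally show ?thesis
    by simp
qed

lemma clique_cover_lower_bound:
  assumes "simple_graph n E" "\<not> (\<exists>S. is_stable n E S \<and> card S = s)"
    and no_clique: "\<not> (\<exists>T. is_clique n E T \<and> card T = t)"
    and "2 \<le> s" "4 * (s - 1) \<le> n" and cover: "clique_cover n E C"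
  shows "n\<^sup>2 \<le> 8 * (s - 1) * t\<^sup>2 * card C"
proof -
  have "card X \<le> t" if "X \<in> C" for X
  proof (rule ccontr)
    assume "\<not> card X \<le> t"
    then obtain T where "T \<subseteq> X" "card T = t"
      by (meson nat_le_linear obtain_subset_with_card_n)
    moreover have "is_clique n E X"
      using cover that unfolding clique_cover_def by blast
    ultimately have "is_clique n E T \<and> card T = t"
      unfolding is_clique_def by blast
    then show False
      using no_clique by blast
  qed
  then have "card {(u, v). E u v} \<le> card C * t\<^sup>2"
    using card_edges_le_clique_cover[OF cover] by blast
  then have "8 * (s - 1) * card {(u, v). E u v} \<le> 8 * (s - 1) * t\<^sup>2 * card C"
    by (simp add: mult.commute mult.left_commute)
  moreover have "n\<^sup>2 \<le> 8 * (s - 1) * card {(u, v). E u v}"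
    using card_edges_ge_if_no_stable_set assms(1,2,4,5) by blast
  ultimately show ?thesis
    by linarith
qed

section \<open>The parameters of the construction\<close>

lemma half_le_one_minus_power:
  fixes z :: real
  assumes "0 \<le> z" "real m * z \<le> 1/2"
  shows "1/2 \<le> (1 - z) ^ m"
proof (cases "m = 0")
  case False
  then have "1 * z \<le> real m * z"
    using assms(1) by (intro mult_right_mono) auto
  then have "z \<le> 1"
    using assms(2) by linarith
  then show ?thesis
    using Bernoulli_inequality[of "- z" m] assms by simp
qed simp

lemma exp_le_one_minus_power:
  fixes z :: real
  assumes "0 \<le> z" "z \<le> 1/2"
  shows "exp (- 2 * z * real m) \<le> (1 - z) ^ m"
proof -
  have "- z - 2 * z\<^sup>2 \<le> ln (1 - z)"
    using assms by (intro ln_one_minus_pos_lower_bound) auto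
  moreover have "z * (2 * z) \<le> z * 1"
    using assms by (intro mult_left_mono) auto
  ultimately have "exp (- 2 * z) \<le> 1 - z"
    using assms by (subst ln_ge_iff[symmetric]) (auto simp: power2_eq_square)
  then have "exp (- 2 * z) ^ m \<le> (1 - z) ^ m"
    by (rule power_mono) simp
  then show ?thesis
    by (simp add: exp_of_nat_mult[symmetric] mult.commute)
qed

lemma one_minus_power_le_exp:
  fixes z :: real
  assumes "0 \<le> z" "z \<le> 1"
  shows "(1 - z) ^ m \<le> exp (- z * real m)"
proof -
  have "(1 - z) ^ m \<le> exp (- z) ^ m"
    using assms exp_ge_add_one_self[of "- z"] by (intro power_mono) auto
  then show ?thesis
    by (simp add: exp_of_nat_mult[symmetric] mult.commute)
qed

lemma local_lemma_conditions:
  fixes p x y :: real and q N m B :: nat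
  assumes p: "0 < p" "p \<le> 1"
    and x: "x = 4 * p ^ q" "x \<le> 1/2" "real (q * N) * x \<le> 1/2" "4 * x * real N \<le> p"
    and y: "y = 2 * exp (- p * real m / 2)" "real B * y \<le> 1/2"
  shows "p ^ q \<le> x * (1 - x) ^ (q * N) * (1 - y) ^ B"
    and "(1 - p) ^ m \<le> y * (1 - x) ^ (m * N) * (1 - y) ^ B"
proof -
  have "0 \<le> x" "0 \<le> y"
    using x(1) y(1) p by auto
  have y_half: "1/2 \<le> (1 - y) ^ B"
    using half_le_one_minus_power \<open>0 \<le> y\<close> y(2) by blast
  have "x * (1/2) * (1/2) \<le> x * (1 - x) ^ (q * N) * (1 - y) ^ B"
    using half_le_one_minus_power[OF \<open>0 \<le> x\<close> x(3)] y_half \<open>0 \<le> x\<close> by (intro mult_mono) auto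
  then show "p ^ q \<le> x * (1 - x) ^ (q * N) * (1 - y) ^ B"
    using x(1) by simp
  have "2 * x * real (m * N) \<le> p * real m / 2"
    using mult_right_mono[OF x(4), of "real m / 2"] by (simp add: algebra_simps)
  then have "exp (- p * real m / 2) \<le> exp (- 2 * x * real (m * N))"
    by simp
  also have "\<dots> \<le> (1 - x) ^ (m * N)"
    using \<open>0 \<le> x\<close> x(2) by (rule exp_le_one_minus_power)
  finally have x_pow: "exp (- p * real m / 2) \<le> (1 - x) ^ (m * N)" .
  have "(1 - p) ^ m \<le> exp (- p * real m)"
    using p by (intro one_minus_power_le_exp) auto
  also have "\<dots> = y * exp (- p * real m / 2) * (1/2)"
    unfolding y(1) by (simp add: exp_add[symmetric])
  also have "\<dots> \<le> y * (1 - x) ^ (m * N) * (1 - y) ^ B"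
    using x_pow y_half \<open>0 \<le> y\<close> x(2) by (intro mult_mono) auto
  finally show "(1 - p) ^ m \<le> y * (1 - x) ^ (m * N) * (1 - y) ^ B" .
qed

locale ramsey_parameters =
  fixes s j :: nat
  assumes s_ge_3: "3 \<le> s" and j_ge_1: "1 \<le> j"
begin

definition k :: nat where "k = 2 ^ j"
definition L :: nat where "L = (s + 1) * j"
definition n :: nat where "n = 2 ^ L"
definition a :: nat where "a = 4 * s\<^sup>2"
definition q :: nat where "q = s choose 2"
definition p :: real where "p = 1 / (a * k\<^sup>2)"
definition t :: nat where "t = 8 * a * k\<^sup>2 * L"
definition x :: real where "x = 4 * p ^ q"
definition y :: real where "y = 2 * exp (- p * real (t choose 2) / 2)"

lemma n_eq_k_power: "n = k ^ (s + 1)"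
  unfolding n_def k_def L_def by (subst power_mult[symmetric]) (simp add: mult.commute)

lemma k_ge_2: "2 \<le> k"
  using power_increasing[OF j_ge_1, of "2::nat"] unfolding k_def by simp

lemma a_ge_36: "36 \<le> a"
proof -
  have "3\<^sup>2 \<le> s\<^sup>2"
    using s_ge_3 by (intro power_mono) auto
  then show ?thesis
    unfolding a_def by simp
qed

lemma two_q: "2 * q = s * (s - 1)"
  using times_binomial_minus1_eq[of 2 s] unfolding q_def by simp

lemma q_ge_3: "3 \<le> q" and eight_q_le_a: "8 * q \<le> a"
proof -
  have "3 * 2 \<le> s * (s - 1)"
    using s_ge_3 by (intro mult_mono) auto
  moreover have "s * (s - 1) \<le> s\<^sup>2"
    by (simp add: power2_eq_square)
  ultimately show "3 \<le> q" "8 * q \<le> a"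
    using two_q unfolding a_def by linarith+
qed

lemma p_pos: "0 < p"
  using a_ge_36 k_ge_2 unfolding p_def by simp

lemma p_le: "p \<le> 1 / 144"
proof -
  have "real 2 ^ 2 \<le> real k ^ 2"
    using k_ge_2 by (intro power_mono) auto
  then have "36 * 4 \<le> real a * real k ^ 2"
    using a_ge_36 by (intro mult_mono) auto
  then show ?thesis
    unfolding p_def by (simp add: field_simps)
qed

text \<open>The choice \<open>n = k ^ (s + 1)\<close> makes \<open>n ^ (s - 2) * k\<^sup>2 = (k\<^sup>2) ^ q\<close>.\<close>
lemma n_power_times_p_power: "real (n ^ (s - 2)) * p ^ q = 1 / (real a ^ q * real k ^ 2)"
proof -
  define m where "m = s - 2"
  then have "s = m + 2"
    using s_ge_3 by simp
  then have "(s + 1) * (s - 2) + 2 = 2 * q"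
    unfolding two_q by (simp add: algebra_simps)
  then have "n ^ (s - 2) * k\<^sup>2 = (k\<^sup>2) ^ q"
    unfolding n_eq_k_power by (metis power_add power_mult)
  then have "real (n ^ (s - 2)) * real k ^ 2 = (real k ^ 2) ^ q"
    by (metis of_nat_mult of_nat_power)
  then have "real (n ^ (s - 2)) = (real k ^ 2) ^ q / real k ^ 2"
    using k_ge_2 by (simp add: field_simps)
  then show ?thesis
    unfolding p_def using k_ge_2 a_ge_36
    by (simp add: power_divide power_mult_distrib field_simps)
qed

lemma x_nonneg: "0 \<le> x" and x_le_half: "x \<le> 1/2"
proof -
  have "p ^ q \<le> p ^ 1"
    using p_pos p_le q_ge_3 by (intro power_decreasing) auto
  then show "0 \<le> x" "x \<le> 1/2"
    using p_pos p_le unfolding x_def by auto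
qed

lemma a_power_q_ge: "16 * real a \<le> real a ^ q"
proof -
  have "16 \<le> real a * real a"
    using a_ge_36 mult_mono[of 4 "real a" 4 "real a"] by simp
  then have "16 * real a \<le> real a * real a * real a"
    by (intro mult_right_mono) auto
  also have "\<dots> = real a ^ 3"
    by (simp add: power3_eq_cube)
  also have "\<dots> \<le> real a ^ q"
    using q_ge_3 a_ge_36 by (intro power_increasing) auto
  finally show ?thesis .
qed

lemma x_times_N: "x * real (n ^ (s - 2)) = 4 / (real a ^ q * real k ^ 2)"
  using n_power_times_p_power unfolding x_def by (simp add: algebra_simps)

lemma q_N_x_le_half: "real (q * n ^ (s - 2)) * x \<le> 1/2"
proof -
  have "real a \<le> real a ^ q"
    using a_power_q_ge a_ge_36 by linarith
  also have "\<dots> \<le> real a ^ q * real k ^ 2"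
    using k_ge_2 by (intro mult_le_cancel_left1[THEN iffD2]) (auto simp: one_le_power)
  finally have "4 * real q / (real a ^ q * real k ^ 2) \<le> 4 * real q / real a"
    using a_ge_36 by (intro divide_left_mono) auto
  also have "\<dots> \<le> 1/2"
    using eight_q_le_a a_ge_36 by (simp add: field_simps)
  finally have "real q * (x * real (n ^ (s - 2))) \<le> 1/2"
    unfolding x_times_N by simp
  then show ?thesis
    by (simp add: algebra_simps)
qed

lemma four_x_N_le_p: "4 * x * real (n ^ (s - 2)) \<le> p"
proof -
  have "16 / (real a ^ q * real k ^ 2) \<le> 1 / (real a * real k ^ 2)"
    using a_power_q_ge a_ge_36 k_ge_2 by (simp add: field_simps)
  then show ?thesis
    using x_times_N unfolding p_def by (simp add: algebra_simps)
qed

lemma L_ge_4: "4 \<le> L"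
  using s_ge_3 j_ge_1 mult_mono[of 4 "s + 1" 1 j] unfolding L_def by simp

lemma s_less_t: "s < t" and t_ge_4: "4 \<le> t"
proof -
  have "s < a"
    using s_ge_3 unfolding a_def by (simp add: power2_eq_square)
  moreover have "a * 1 * 1 \<le> a * k\<^sup>2 * L"
    using k_ge_2 L_ge_4 by (intro mult_mono) auto
  ultimately show "s < t" "4 \<le> t"
    unfolding t_def using s_ge_3 by linarith+
qed

lemma p_times_t: "p * real t = 8 * real L"
  using a_ge_36 k_ge_2 unfolding p_def t_def by simp

lemma t_choose_2: "p * real (t choose 2) / 2 = 2 * real L * (real t - 1)"
proof -
  have "2 * (t choose 2) = t * (t - 1)"
    using times_binomial_minus1_eq[of 2 t] by simp
  then have "real (2 * (t choose 2)) = real (t * (t - 1))"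
    by (simp only:)
  then have "p * real (t choose 2) / 2 = p * real t * (real t - 1) / 4"
    using t_ge_4 by (simp add: of_nat_diff)
  then show ?thesis
    using p_times_t by simp
qed

lemma n_power_t_times_y: "real n ^ t * y \<le> 1/2"
proof -
  have "real n = 2 ^ L"
    unfolding n_def by simp
  also have "\<dots> \<le> exp 1 ^ L"
    using exp_ge_add_one_self[of 1] by (intro power_mono) auto
  finally have "real n ^ t \<le> (exp 1 ^ L) ^ t"
    by (rule power_mono) simp
  also have "\<dots> = exp (real L * real t)"
    by (simp add: power_mult[symmetric] exp_of_nat_mult[symmetric])
  finally have "real n ^ t * y \<le> exp (real L * real t) * y"
    unfolding y_def by (intro mult_right_mono) auto
  also have "\<dots> = 2 * exp (real L * real t - 2 * real L * (real t - 1))"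
    unfolding y_def t_choose_2[symmetric] by (simp add: mult.left_commute flip: exp_add)
  also have "\<dots> \<le> 2 * exp (- 2)"
  proof -
    have "2 * 1 \<le> real L * (real t - 2)"
      using L_ge_4 t_ge_4 by (intro mult_mono) auto
    then show ?thesis
      by (simp add: algebra_simps)
  qed
  also have "\<dots> \<le> 1/2"
  proof -
    have "2 * 2 \<le> exp (1::real) * exp 1"
      using exp_ge_add_one_self[of 1] by (intro mult_mono) auto
    then show ?thesis
      by (simp add: exp_minus field_simps flip: exp_add)
  qed
  finally show ?thesis .
qed

lemma y_nonneg: "0 \<le> y"
  unfolding y_def by simp

lemma y_le_half: "y \<le> 1/2"
proof -
  have "1 * y \<le> real n ^ t * y"
    using y_nonneg unfolding n_def by (intro mult_right_mono) auto
  then show ?thesis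
    using n_power_t_times_y by simp
qed

lemma binomial_n_t_times_y: "real (n choose t) * y \<le> 1/2"
proof -
  have "n choose t \<le> n ^ t"
    by (cases "t \<le> n") (auto simp: binomial_eq_0 binomial_le_pow)
  then have "real (n choose t) * y \<le> real n ^ t * y"
    using y_nonneg by (intro mult_right_mono) (simp_all flip: of_nat_power)
  then show ?thesis
    using n_power_t_times_y by simp
qed

definition c :: real where "c = 1 / (512 * real a ^ 2 * (real s - 1))"

lemma c_pos: "0 < c"
  using s_ge_3 a_ge_36 unfolding c_def by simp

lemma n_ge: "4 * (s - 1) \<le> n"
proof -
  have "4 * (s - 1) < 4 * 2 ^ (s - 1)"
    using less_exp[of "s - 1"] by simp
  also have "\<dots> = 2 ^ (s + 1)"
    using s_ge_3 by (cases s) simp_all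
  also have "\<dots> \<le> n"
    unfolding n_def L_def using mult_le_mono2[OF j_ge_1, of "s + 1"] by (intro power_increasing) auto
  finally show ?thesis by simp
qed

lemma graph_exists: "\<exists>E. simple_graph n E \<and> \<not> (\<exists>S. is_stable n E S \<and> card S = s) \<and>
    \<not> (\<exists>T. is_clique n E T \<and> card T = t)"
proof (rule ramsey_graph_exists)
  show "p ^ (s choose 2) \<le> x * (1 - x) ^ ((s choose 2) * n ^ (s - 2)) * (1 - y) ^ (n choose t)"
    and "(1 - p) ^ (t choose 2) \<le> y * (1 - x) ^ ((t choose 2) * n ^ (s - 2)) * (1 - y) ^ (n choose t)"
    using local_lemma_conditions[OF p_pos _ x_def x_le_half q_N_x_le_half four_x_N_le_p y_def
        binomial_n_t_times_y] p_le
    unfolding q_def by auto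
qed (use p_pos p_le x_nonneg x_le_half y_nonneg y_le_half s_ge_3 s_less_t in auto)

lemma bound_eq: "c * real n powr (2 - 4 / (real s + 1)) / (log 2 (real n))\<^sup>2 =
    real n ^ 2 / (8 * (real s - 1) * real t ^ 2)"
proof -
  have "real k powr real (s + 1) = real k ^ (s + 1)"
    using k_ge_2 by (intro powr_realpow) simp
  then have "real n = real k powr (real s + 1)"
    by (simp add: n_eq_k_power add.commute)
  then have "real n powr (4 / (real s + 1)) = real k powr ((real s + 1) * (4 / (real s + 1)))"
    by (simp only: powr_powr)
  also have "(real s + 1) * (4 / (real s + 1)) = 4"
    by (simp add: field_simps)
  also have "real k powr 4 = real k ^ 4"
    using k_ge_2 by (simp add: powr_numeral)
  finally have n_powr: "real n powr (2 - 4 / (real s + 1)) = real n ^ 2 / real k ^ 4"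
    unfolding n_def by (simp add: powr_diff powr_realpow)
  have log_n: "log 2 (real n) = real L"
    unfolding n_def by (simp add: log_nat_power)
  show ?thesis
    unfolding n_powr log_n c_def t_def using s_ge_3 a_ge_36 k_ge_2 L_ge_4
    by (simp add: field_simps power2_eq_square power4_eq_xxxx)
qed

lemma power_of_two_witness: "0 < n \<and> (\<exists>E. simple_graph n E \<and> \<not> (\<exists>S. is_stable n E S \<and> card S = s) \<and>
    (\<forall>C. clique_cover n E C \<longrightarrow>
      c * real n powr (2 - 4 / (real s + 1)) / (log 2 (real n))\<^sup>2 \<le> real (card C)))"
proof -
  obtain E where E: "simple_graph n E" "\<not> (\<exists>S. is_stable n E S \<and> card S = s)"
    "\<not> (\<exists>T. is_clique n E T \<and> card T = t)"
    using graph_exists by blast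
  have "c * real n powr (2 - 4 / (real s + 1)) / (log 2 (real n))\<^sup>2 \<le> real (card C)"
    if "clique_cover n E C" for C
  proof -
    have "n\<^sup>2 \<le> 8 * (s - 1) * t\<^sup>2 * card C"
      using clique_cover_lower_bound[OF E _ n_ge that] s_ge_3 by simp
    then have "real (n\<^sup>2) \<le> real (8 * (s - 1) * t\<^sup>2 * card C)"
      by (simp only: of_nat_le_iff)
    then have "real n ^ 2 \<le> 8 * (real s - 1) * real t ^ 2 * real (card C)"
      using s_ge_3 by (simp add: of_nat_diff)
    then show ?thesis
      unfolding bound_eq using s_ge_3 t_ge_4 by (simp add: field_simps)
  qed
  then show ?thesis
    using E unfolding n_def by auto
qed

end

theorem mainTheorem10:
  fixes s :: nat
  assumes "s \<ge> 3"
  shows "\<exists>c::real. c > 0 \<and>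
    infinite {n::nat. n > 0 \<and> (\<exists>E. simple_graph n E \<and>
        \<not> (\<exists>S. is_stable n E S \<and> card S = s) \<and>
        (\<forall>C. clique_cover n E C \<longrightarrow>
           c * real n powr (2 - 4 / (real s + 1)) / (log 2 (real n))^2 \<le> real (card C)))}"
    (is "\<exists>c. _ \<and> infinite (?S c)")
proof (intro exI conjI)
  interpret ramsey_parameters s 1
    using assms by unfold_locales auto
  show "0 < c"
    by (rule c_pos)
  have "2 ^ ((s + 1) * Suc j) \<in> ?S c" for j
  proof -
    interpret param_j: ramsey_parameters s "Suc j"
      using assms by unfold_locales auto
    show ?thesis
      using param_j.power_of_two_witness unfolding param_j.n_def param_j.L_def by simp
  qed
  moreover have "strict_mono (\<lambda>j. 2 ^ ((s + 1) * Suc j) :: nat)"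
  proof (rule strict_monoI)
    fix i j :: nat assume "i < j"
    then have "(s + 1) * Suc i < (s + 1) * Suc j"
      by (intro mult_strict_left_mono) auto
    then show "2 ^ ((s + 1) * Suc i) < (2::nat) ^ ((s + 1) * Suc j)"
      by (rule power_strict_increasing) simp
  qed
  ultimately show "infinite (?S c)"
    by (meson infinite_super range_inj_infinite strict_mono_imp_inj_on image_subsetI rangeE)
qed

end
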